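(* In the setting described in the context, the function $\mathcal{V}$ is continuous on $\mathcal{K}_{\mathcal{D}_{\mathcal{A}}}(\mathbb{R}^n):=\{X\in\mathcal{K}(\mathbb{R}^n): X\cap\mathcal{D}_{\mathcal{A}}\neq\emptyset\}$ with respect to the Hausdorff distance.
   Context: Let $\|\cdot\|$ be a norm on $\mathbb{R}^n$ and $\mathrm{dist}(x,\Omega):=\inf_{y\in\Omega}\|x-y\|$. Let $\mathcal{K}(\mathbb{R}^n)$ denote the nonempty compact subsets of $\mathbb{R}^n$, equipped with the Hausdorff distance $d_H(X,Y):=\max\{\sup_{x\in X}\mathrm{dist}(x,Y),\sup_{y\in Y}\mathrm{dist}(y,X)\}$. Consider $x_{k+1}=f(x_k,u_k)$ with $f:\mathbb{R}^n\times\mathbb{R}^m\to\mathbb{R}^n$ continuous and inputs $u_k\in U$, $U\subset\mathbb{R}^m$ nonempty compact. For $x\in\mathbb{R}^n$ and $\pi:\mathbb{Z}_+\to U$, $\varphi_x^\pi(0)=x$, $\varphi_x^\pi(k+1)=f(\varphi_x^\pi(k),\pi(k))$; $\mathcal{R}(X,k):=\{\varphi_x^\pi(k):x\in X,\pi\in U^{\mathbb{Z}_+}\}$. Let $\mathcal{A}\in\mathcal{K}(\mathbb{R}^n)$ be controlled invariant (every $x\in\mathcal{A}$ admits $u\in U$ with $f(x,u)\in\mathcal{A}$). Assume local $\ell_p$-stabilizability: there exist $r>0$, $M\ge1$, $p>0$, $\lambda:[0,r]\times\mathbb{Z}_+\to\mathbb{R}_+$ such that (1) for each $k$, $s\mapsto\lambda(s,k)$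 is continuous, nondecreasing, $\lambda(0,k)=0$; for each $s$, $k\mapsto\lambda(s,k)$ is nonincreasing, $\lambda(s,0)\le s$; (2) $\sum_{k}\lambda(r,k)^p<\infty$; (3) for every $x$ with $\mathrm{dist}(x,\mathcal{A})\le r$ there is $\pi\in U^{\mathbb{Z}_+}$ with $\mathrm{dist}(\varphi_x^\pi(k),\mathcal{A})\le M\lambda(\mathrm{dist}(x,\mathcal{A}),k)$ for all $k$. Let $\mathcal{D}_{\mathcal{A}}:=\{x:\exists\pi\in U^{\mathbb{Z}_+},\ \lim_{k\to\infty}\mathrm{dist}(\varphi_x^\pi(k),\mathcal{A})=0\}$. Let $\alpha:\mathbb{R}^n\to\mathbb{R}_+$ be continuous with $\underline{\alpha}\,\mathrm{dist}(x,\mathcal{A})^{\bar p}\le\alpha(x)\le\overline{\alpha}\,\mathrm{dist}(x,\mathcal{A})^{\bar p}$, constants $\underline{\alpha},\overline{\alpha}>0$, $\bar p\ge p$. Define $\Psi(X):=\inf_{y\in X}\alpha(y)$ and $\mathcal{V}(X):=\sum_{k=0}^\infty\Psi(\mathcal{R}(X,k))\in[0,\infty]$. *)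

theory Defs
  imports "HOL-Analysis.Analysis"
begin

definition is_norm :: "(real^'n \<Rightarrow> real) \<Rightarrow> bool" where
  "is_norm nrm \<longleftrightarrow>
     (\<forall>x. 0 \<le> nrm x) \<and> (\<forall>x. nrm x = 0 \<longleftrightarrow> x = 0) \<and>
     (\<forall>c x. nrm (c *\<^sub>R x) = \<bar>c\<bar> * nrm x) \<and>
     (\<forall>x y. nrm (x + y) \<le> nrm x + nrm y)"

definition ndist :: "(real^'n \<Rightarrow> real) \<Rightarrow> real^'n \<Rightarrow> (real^'n) set \<Rightarrow> real" where
  "ndist nrm x \<Omega> = Inf ((\<lambda>y. nrm (x - y)) ` \<Omega>)"

text \<open>Hausdorff distance (used on nonempty compact sets).\<close>
definition nhausdist :: "(real^'n \<Rightarrow> real) \<Rightarrow> (real^'n) set \<Rightarrow> (real^'n) set \<Rightarrow> real" where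
  "nhausdist nrm X Y = max (Sup ((\<lambda>x. ndist nrm x Y) ` X)) (Sup ((\<lambda>y. ndist nrm y X) ` Y))"

primrec traj :: "('x \<Rightarrow> 'u \<Rightarrow> 'x) \<Rightarrow> 'x \<Rightarrow> (nat \<Rightarrow> 'u) \<Rightarrow> nat \<Rightarrow> 'x" where
  "traj f x \<pi> 0 = x"
| "traj f x \<pi> (Suc k) = f (traj f x \<pi> k) (\<pi> k)"

definition reach :: "('x \<Rightarrow> 'u \<Rightarrow> 'x) \<Rightarrow> 'u set \<Rightarrow> 'x set \<Rightarrow> nat \<Rightarrow> 'x set" where
  "reach f U X k = {traj f x \<pi> k | x \<pi>. x \<in> X \<and> (\<forall>j. \<pi> j \<in> U)}"

definition domA :: "(real^'n \<Rightarrow> real) \<Rightarrow> (real^'n \<Rightarrow> 'u \<Rightarrow> real^'n) \<Rightarrow> 'u set \<Rightarrow> (real^'n) set \<Rightarrow> (real^'n) set" where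
  "domA nrm f U A = {x. \<exists>\<pi>. (\<forall>j. \<pi> j \<in> U) \<and> (\<lambda>k. ndist nrm (traj f x \<pi> k) A) \<longlonglongrightarrow> 0}"

definition Psi :: "('x \<Rightarrow> real) \<Rightarrow> 'x set \<Rightarrow> real" where
  "Psi \<alpha> X = Inf (\<alpha> ` X)"

definition Vfun :: "('x \<Rightarrow> real) \<Rightarrow> ('x \<Rightarrow> 'u \<Rightarrow> 'x) \<Rightarrow> 'u set \<Rightarrow> 'x set \<Rightarrow> ennreal" where
  "Vfun \<alpha> f U X = (\<Sum>k. ennreal (Psi \<alpha> (reach f U X k)))"

end

(* Psi(R(X,k)) is the infimum of (x, pi) |-> alpha(phi_x^pi(k)) over X times U^N.  This map is
   jointly continuous and U^N is compact by Tychonoff's theorem, so on a compact neighbourhood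
   of X it is uniformly continuous and each term of V depends continuously on X for the
   Hausdorff distance.  The tails are uniformly dominated near X: a point x0 of X in D_A is
   steered to within r of A in K steps, nearby points follow with the same input by
   continuity, and from there local stabilizability bounds the remaining terms by the summable
   sequence alpha_hi (M lambda(r,j))^pbar.  Tannery's theorem then lets the limit pass through
   the series. *)
theory Submission
  imports Defs
begin

lemma is_normD:
  assumes "is_norm nrm"
  shows "0 \<le> nrm x" "nrm x = 0 \<longleftrightarrow> x = 0" "nrm (c *\<^sub>R x) = \<bar>c\<bar> * nrm x"
    "nrm (x + y) \<le> nrm x + nrm y"
  using assms unfolding is_norm_def by blast+

lemma is_norm_zero: "is_norm nrm \<Longrightarrow> nrm 0 = 0"
  using is_normD(2) by blast

lemma is_norm_minus_commute:
  assumes "is_norm nrm"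
  shows "nrm (x - y) = nrm (y - x)"
  using is_normD(3)[OF assms, of "-1" "y - x"] by simp

lemma is_norm_sum:
  assumes "is_norm nrm"
  shows "nrm (sum g S) \<le> (\<Sum>i\<in>S. nrm (g i))"
proof (induction S rule: infinite_finite_induct)
  case (insert i S)
  then show ?case using is_normD(4)[OF assms, of "g i" "sum g S"] by simp
qed (simp_all add: is_norm_zero[OF assms])

lemma is_norm_le_norm:
  fixes nrm :: "real^'n \<Rightarrow> real"
  assumes "is_norm nrm"
  obtains C where "C > 0" "\<And>x. nrm x \<le> C * norm x"
proof
  define C where "C = 1 + (\<Sum>i\<in>UNIV. nrm (axis i 1 :: real^'n))"
  have sum_nonneg: "0 \<le> (\<Sum>i\<in>UNIV. nrm (axis i 1 :: real^'n))"
    by (intro sum_nonneg is_normD(1)[OF assms])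
  then show "C > 0" by (simp add: C_def)
  fix x :: "real^'n"
  have "nrm x = nrm (\<Sum>i\<in>UNIV. x$i *\<^sub>R axis i 1)"
    using basis_expansion[of x] by (simp add: scalar_mult_eq_scaleR)
  also have "\<dots> \<le> (\<Sum>i\<in>UNIV. \<bar>x$i\<bar> * nrm (axis i 1 :: real^'n))"
    using is_norm_sum[OF assms, of "\<lambda>i. x$i *\<^sub>R axis i 1" UNIV]
    by (simp add: is_normD(3)[OF assms])
  also have "\<dots> \<le> (\<Sum>i\<in>UNIV. norm x * nrm (axis i 1 :: real^'n))"
    by (intro sum_mono mult_right_mono component_le_norm_cart is_normD(1)[OF assms])
  also have "\<dots> \<le> C * norm x"
    using sum_nonneg by (simp add: C_def sum_distrib_left[symmetric] algebra_simps)
  finally show "nrm x \<le> C * norm x" .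
qed

lemma ndist_le:
  assumes "is_norm nrm" "a \<in> A"
  shows "ndist nrm x A \<le> nrm (x - a)"
proof -
  have "bdd_below ((\<lambda>a. nrm (x - a)) ` A)"
    by (rule bdd_belowI2[of _ 0]) (rule is_normD(1)[OF assms(1)])
  then show ?thesis
    unfolding ndist_def using assms(2) by (simp add: cInf_lower)
qed

lemma ndist_nonneg:
  assumes "is_norm nrm" "A \<noteq> {}"
  shows "0 \<le> ndist nrm x A"
  unfolding ndist_def using assms(2) by (intro cInf_greatest) (auto simp: is_normD(1)[OF assms(1)])

lemma ndist_lessE:
  assumes "A \<noteq> {}" "ndist nrm x A < d"
  obtains a where "a \<in> A" "nrm (x - a) < d"
  using cInf_lessD[of "(\<lambda>a. nrm (x - a)) ` A" d] assms that by (auto simp: ndist_def)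

lemma ndist_le_add:
  assumes "is_norm nrm" "A \<noteq> {}"
  shows "ndist nrm x A \<le> nrm (x - z) + ndist nrm z A"
proof -
  have "ndist nrm x A - nrm (x - z) \<le> ndist nrm z A"
    unfolding ndist_def[of nrm z]
  proof (rule cInf_greatest)
    fix v assume "v \<in> (\<lambda>a. nrm (z - a)) ` A"
    then obtain a where "a \<in> A" "v = nrm (z - a)" by blast
    moreover have "nrm (x - a) \<le> nrm (x - z) + nrm (z - a)"
      using is_normD(4)[OF assms(1), of "x - z" "z - a"] by simp
    ultimately show "ndist nrm x A - nrm (x - z) \<le> v"
      using ndist_le[OF assms(1), of a A x] by linarith
  qed (use assms(2) in simp)
  then show ?thesis by simp
qed

lemma continuous_on_ndist:
  fixes nrm :: "real^'n \<Rightarrow> real"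
  assumes "is_norm nrm" "A \<noteq> {}"
  shows "continuous_on UNIV (\<lambda>x. ndist nrm x A)"
proof -
  obtain C where "C > 0" and C: "\<And>x. nrm x \<le> C * norm x"
    using is_norm_le_norm[OF assms(1)] by blast
  have "C-lipschitz_on UNIV (\<lambda>x. ndist nrm x A)"
  proof (rule lipschitz_onI)
    fix x y :: "real^'n"
    have "nrm (x - y) \<le> C * dist x y" "nrm (y - x) \<le> C * dist x y"
      using C[of "x - y"] is_norm_minus_commute[OF assms(1)] by (simp_all add: dist_norm)
    then show "dist (ndist nrm x A) (ndist nrm y A) \<le> C * dist x y"
      using ndist_le_add[OF assms, of x y] ndist_le_add[OF assms, of y x]
      by (simp add: dist_real_def abs_le_iff)
  qed (use \<open>C > 0\<close> in simp)
  then show ?thesis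
    by (rule lipschitz_on_continuous_on)
qed

lemma norm_le_is_norm:
  fixes nrm :: "real^'n \<Rightarrow> real"
  assumes "is_norm nrm"
  obtains c where "c > 0" "\<And>x. norm x \<le> c * nrm x"
proof -
  have "continuous_on UNIV nrm"
    using continuous_on_ndist[OF assms, of "{0}"] by (simp add: ndist_def)
  then have "continuous_on (sphere 0 1) nrm"
    by (rule continuous_on_subset) simp
  moreover have "sphere (0::real^'n) 1 \<noteq> {}"
    by simp
  ultimately obtain z where z: "z \<in> sphere 0 1" "\<And>y. y \<in> sphere 0 1 \<Longrightarrow> nrm z \<le> nrm y"
    using continuous_attains_inf[OF compact_sphere] by blast
  then have "z \<noteq> 0"
    by auto
  then have "nrm z > 0"
    using is_normD(1,2)[OF assms, of z] by linarith
  have bound: "norm x \<le> (1 / nrm z) * nrm x" for x :: "real^'n"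
  proof (cases "x = 0")
    case False
    have "nrm z \<le> nrm ((1 / norm x) *\<^sub>R x)"
      using False by (intro z(2)) simp
    also have "\<dots> = nrm x / norm x"
      by (simp add: is_normD(3)[OF assms])
    finally show ?thesis
      using False \<open>nrm z > 0\<close> by (simp add: field_simps)
  qed (simp add: is_norm_zero[OF assms])
  show ?thesis
    by (rule that[OF _ bound]) (use \<open>nrm z > 0\<close> in simp)
qed

text \<open>The Hausdorff neighbourhood filter is taken for the Euclidean metric; since all norms on
  R^n are equivalent, it is also the one for \<^const>\<open>nhausdist\<close>.\<close>

definition hausdorff_nhds :: "'a::metric_space set \<Rightarrow> 'a set filter" where
  "hausdorff_nhds X = (INF e\<in>{0<..}. principal
     {Y. (\<forall>x\<in>X. \<exists>y\<in>Y. dist x y < e) \<and> (\<forall>y\<in>Y. \<exists>x\<in>X. dist x y < e)})"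

lemma eventually_hausdorff_nhds:
  "eventually P (hausdorff_nhds X) \<longleftrightarrow>
     (\<exists>e>0. \<forall>Y. (\<forall>x\<in>X. \<exists>y\<in>Y. dist x y < e) \<longrightarrow> (\<forall>y\<in>Y. \<exists>x\<in>X. dist x y < e) \<longrightarrow> P Y)"
proof -
  define S where "S e = {Y. (\<forall>x\<in>X. \<exists>y\<in>Y. dist x y < e) \<and> (\<forall>y\<in>Y. \<exists>x\<in>X. dist x y < e)}"
    for e :: real
  have mono: "S e \<subseteq> S e'" if "e \<le> e'" for e e'
  proof -
    have "dist x y < e \<Longrightarrow> dist x y < e'" for x y :: 'a
      using that by linarith
    then show ?thesis
      unfolding S_def by blast
  qed
  have "eventually P (INF e\<in>{0<..}. principal (S e)) \<longleftrightarrow> (\<exists>e\<in>{0<..}. eventually P (principal (S e)))"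
  proof (rule eventually_INF_base)
    fix a b :: real
    show "\<exists>e\<in>{0<..}. principal (S e) \<le> inf (principal (S a)) (principal (S b))"
      if "a \<in> {0<..}" "b \<in> {0<..}"
      using that mono[of "min a b" a] mono[of "min a b" b] by (intro bexI[of _ "min a b"]) auto
  qed simp
  then show ?thesis
    unfolding hausdorff_nhds_def S_def eventually_principal by blast
qed

lemma hausdorff_nhds_neq_bot: "hausdorff_nhds X \<noteq> bot"
proof
  assume "hausdorff_nhds X = bot"
  then have "eventually (\<lambda>_. False) (hausdorff_nhds X)"
    by simp
  then obtain e :: real where "e > 0"
    and X_close: "\<And>Y. (\<forall>x\<in>X. \<exists>y\<in>Y. dist x y < e) \<Longrightarrow> (\<forall>y\<in>Y. \<exists>x\<in>X. dist x y < e) \<Longrightarrow> False"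
    unfolding eventually_hausdorff_nhds by blast
  have "\<forall>x\<in>X. \<exists>y\<in>X. dist x y < e" "\<forall>y\<in>X. \<exists>x\<in>X. dist x y < e"
    using \<open>e > 0\<close> by (metis dist_self)+
  then show False
    by (rule X_close)
qed

lemma eventually_hausdorff_nhds_nonempty:
  assumes "X \<noteq> {}"
  shows "eventually (\<lambda>Y. Y \<noteq> {}) (hausdorff_nhds X)"
  unfolding eventually_hausdorff_nhds
  by (intro exI[of _ "1::real"] conjI allI impI) (use assms in auto)

lemma nhausdist_lessD:
  fixes nrm :: "real^'n \<Rightarrow> real"
  assumes norm: "is_norm nrm" and "compact X" "compact Y" "X \<noteq> {}" "Y \<noteq> {}"
    and "nhausdist nrm Y X < d"
  shows "\<forall>x\<in>X. \<exists>y\<in>Y. nrm (x - y) < d" "\<forall>y\<in>Y. \<exists>x\<in>X. nrm (y - x) < d"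
proof -
  have ndist_less: "\<exists>t\<in>T. nrm (s - t) < d"
    if "compact S" "T \<noteq> {}" "s \<in> S" "Sup ((\<lambda>z. ndist nrm z T) ` S) < d" for S T s
  proof -
    have "compact ((\<lambda>z. ndist nrm z T) ` S)"
      using continuous_on_ndist[OF norm \<open>T \<noteq> {}\<close>] \<open>compact S\<close>
      by (intro compact_continuous_image) (auto intro: continuous_on_subset)
    then have "ndist nrm s T \<le> Sup ((\<lambda>z. ndist nrm z T) ` S)"
      using \<open>s \<in> S\<close> by (intro cSup_upper bounded_imp_bdd_above compact_imp_bounded) auto
    then have "ndist nrm s T < d"
      using that(4) by linarith
    then show ?thesis
      using ndist_lessE[OF \<open>T \<noteq> {}\<close>] by blast
  qed
  have "Sup ((\<lambda>x. ndist nrm x Y) ` X) < d" "Sup ((\<lambda>y. ndist nrm y X) ` Y) < d"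
    using assms(6) by (simp_all add: nhausdist_def)
  then show "\<forall>x\<in>X. \<exists>y\<in>Y. nrm (x - y) < d" "\<forall>y\<in>Y. \<exists>x\<in>X. nrm (y - x) < d"
    using ndist_less assms(2-5) by blast+
qed

lemma eventually_hausdorff_nhds_nhausdist:
  fixes nrm :: "real^'n \<Rightarrow> real"
  assumes norm: "is_norm nrm" and X: "compact X" "X \<noteq> {}"
    and "eventually P (hausdorff_nhds X)"
  shows "\<exists>\<delta>>0. \<forall>Y. compact Y \<longrightarrow> Y \<noteq> {} \<longrightarrow> nhausdist nrm Y X < \<delta> \<longrightarrow> P Y"
proof -
  obtain e where "e > 0" and P:
    "\<And>Y. (\<forall>x\<in>X. \<exists>y\<in>Y. dist x y < e) \<Longrightarrow> (\<forall>y\<in>Y. \<exists>x\<in>X. dist x y < e) \<Longrightarrow> P Y"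
    using assms(4) unfolding eventually_hausdorff_nhds by blast
  obtain c where "c > 0" and c: "\<And>v. norm v \<le> c * nrm v"
    using norm_le_is_norm[OF norm] by blast
  have dist_less: "dist x y < e" if "nrm (x - y) < e / c" for x y :: "real^'n"
    using c[of "x - y"] that \<open>c > 0\<close> by (simp add: dist_norm field_simps)
  show ?thesis
  proof (intro exI[of _ "e / c"] conjI allI impI)
    fix Y assume Y: "compact Y" "Y \<noteq> {}" "nhausdist nrm Y X < e / c"
    note close = nhausdist_lessD[OF norm X(1) Y(1) X(2) Y(2,3)]
    show "P Y"
    proof (rule P)
      show "\<forall>x\<in>X. \<exists>y\<in>Y. dist x y < e"
        using close(1) dist_less by blast
      show "\<forall>y\<in>Y. \<exists>x\<in>X. dist x y < e"
        using close(2) dist_less by (metis dist_commute)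
    qed
  qed (use \<open>e > 0\<close> \<open>c > 0\<close> in simp)
qed

lemma Inf_image_le_Inf_image_add:
  fixes h :: "'a \<Rightarrow> real"
  assumes "B \<noteq> {}" "bdd_below (h ` A)" "\<And>b. b \<in> B \<Longrightarrow> \<exists>a\<in>A. h a \<le> h b + e"
  shows "Inf (h ` A) \<le> Inf (h ` B) + e"
proof -
  have "Inf (h ` A) - e \<le> Inf (h ` B)"
  proof (rule cInf_greatest)
    fix v assume "v \<in> h ` B"
    then obtain b a where "v = h b" "a \<in> A" "h a \<le> h b + e"
      using assms(3) by blast
    then show "Inf (h ` A) - e \<le> v"
      using cInf_lower[OF imageI assms(2)] by fastforce
  qed (use assms(1) in simp)
  then show ?thesis by simp
qed

lemma Inf_image_Times_close:
  fixes g :: "'a \<times> 'b \<Rightarrow> real"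
  assumes "X \<noteq> {}" "Y \<noteq> {}" "P \<noteq> {}" "\<And>z. 0 \<le> g z"
    and "\<forall>x\<in>X. \<exists>y\<in>Y. R x y" "\<forall>y\<in>Y. \<exists>x\<in>X. R x y"
    and close: "\<And>x y p. x \<in> X \<Longrightarrow> R x y \<Longrightarrow> p \<in> P \<Longrightarrow> \<bar>g (x, p) - g (y, p)\<bar> \<le> e"
  shows "\<bar>Inf (g ` (Y \<times> P)) - Inf (g ` (X \<times> P))\<bar> \<le> e"
proof -
  have bdd: "bdd_below (g ` S)" for S
    by (rule bdd_belowI2[of _ 0]) (rule assms(4))
  have "Inf (g ` (X \<times> P)) \<le> Inf (g ` (Y \<times> P)) + e"
  proof (rule Inf_image_le_Inf_image_add[OF _ bdd])
    fix b assume "b \<in> Y \<times> P"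
    then obtain y p x where "b = (y, p)" "p \<in> P" "x \<in> X" "R x y"
      using assms(6) by blast
    then show "\<exists>a\<in>X \<times> P. g a \<le> g b + e"
      using close[of x y p] by (intro bexI[of _ "(x, p)"]) (auto simp: abs_le_iff)
  qed (use assms(2,3) in simp)
  moreover have "Inf (g ` (Y \<times> P)) \<le> Inf (g ` (X \<times> P)) + e"
  proof (rule Inf_image_le_Inf_image_add[OF _ bdd])
    fix a assume "a \<in> X \<times> P"
    then obtain x p y where "a = (x, p)" "x \<in> X" "p \<in> P" "y \<in> Y" "R x y"
      using assms(5) by blast
    then show "\<exists>b\<in>Y \<times> P. g b \<le> g a + e"
      using close[of x y p] by (intro bexI[of _ "(y, p)"]) (auto simp: abs_le_iff)
  qed (use assms(1,3) in simp)
  ultimately show ?thesis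
    by (simp add: abs_le_iff)
qed

lemma uniformly_continuous_near_compact_Times:
  fixes g :: "'a::{real_normed_vector,heine_borel} \<times> 'b::metric_space \<Rightarrow> real"
  assumes "compact X" "compact P" "continuous_on UNIV g" "\<epsilon> > 0"
  shows "\<exists>\<delta>>0. \<forall>x\<in>X. \<forall>y. \<forall>p\<in>P. dist x y < \<delta> \<longrightarrow> \<bar>g (x, p) - g (y, p)\<bar> < \<epsilon>"
proof -
  define N where "N = (\<Union>x\<in>X. \<Union>v\<in>cball 0 1. {x + v})"
  have "compact (N \<times> P)"
    unfolding N_def using assms(1,2) by (intro compact_Times compact_sums') auto
  then have "uniformly_continuous_on (N \<times> P) g"
    using assms(3) by (intro compact_uniformly_continuous) (auto intro: continuous_on_subset)
  then obtain \<eta> where "\<eta> > 0" and \<eta>: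
    "\<And>z z'. z \<in> N \<times> P \<Longrightarrow> z' \<in> N \<times> P \<Longrightarrow> dist z' z < \<eta> \<Longrightarrow> dist (g z') (g z) < \<epsilon>"
    unfolding uniformly_continuous_on_def using assms(4) by metis
  have in_N: "x \<in> N" "y \<in> N" if "x \<in> X" "dist x y < 1" for x y
  proof -
    show "x \<in> N"
      unfolding N_def using that(1) by (intro UN_I[of x] UN_I[of 0]) auto
    show "y \<in> N"
      unfolding N_def using that
      by (intro UN_I[of x] UN_I[of "y - x"]) (auto simp: dist_norm norm_minus_commute)
  qed
  show ?thesis
  proof (intro exI[of _ "min \<eta> 1"] conjI ballI allI impI)
    fix x y p assume "x \<in> X" "p \<in> P" "dist x y < min \<eta> 1"
    then show "\<bar>g (x, p) - g (y, p)\<bar> < \<epsilon>"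
      using \<eta>[of "(x, p)" "(y, p)"] in_N[of x y] by (simp add: dist_Pair_Pair dist_commute dist_real_def)
  qed (use \<open>\<eta> > 0\<close> in simp)
qed

lemma tendsto_Inf_image_Times_hausdorff_nhds:
  fixes g :: "'a::{real_normed_vector,heine_borel} \<times> 'b::metric_space \<Rightarrow> real"
  assumes X: "compact X" "X \<noteq> {}" and P: "compact P" "P \<noteq> {}"
    and g: "continuous_on UNIV g" "\<And>z. 0 \<le> g z"
  shows "((\<lambda>Y. Inf (g ` (Y \<times> P))) \<longlongrightarrow> Inf (g ` (X \<times> P))) (hausdorff_nhds X)"
proof (rule tendstoI)
  fix \<epsilon> :: real assume "\<epsilon> > 0"
  then have "\<epsilon> / 2 > 0"
    by simp
  then obtain \<delta> where "\<delta> > 0" and \<delta>: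
    "\<And>x y p. x \<in> X \<Longrightarrow> dist x y < \<delta> \<Longrightarrow> p \<in> P \<Longrightarrow> \<bar>g (x, p) - g (y, p)\<bar> < \<epsilon> / 2"
    using uniformly_continuous_near_compact_Times[OF X(1) P(1) g(1)] by metis
  show "eventually (\<lambda>Y. dist (Inf (g ` (Y \<times> P))) (Inf (g ` (X \<times> P))) < \<epsilon>) (hausdorff_nhds X)"
    unfolding eventually_hausdorff_nhds
  proof (intro exI[of _ \<delta>] conjI allI impI)
    fix Y
    assume XY: "\<forall>x\<in>X. \<exists>y\<in>Y. dist x y < \<delta>" and YX: "\<forall>y\<in>Y. \<exists>x\<in>X. dist x y < \<delta>"
    then have "Y \<noteq> {}"
      using X(2) by blast
    have "\<bar>Inf (g ` (Y \<times> P)) - Inf (g ` (X \<times> P))\<bar> \<le> \<epsilon> / 2"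
      using X(2) \<open>Y \<noteq> {}\<close> P(2) g(2) XY YX
    proof (rule Inf_image_Times_close[where R = "\<lambda>x y. dist x y < \<delta>"])
      fix x y p assume "x \<in> X" "dist x y < \<delta>" "p \<in> P"
      then show "\<bar>g (x, p) - g (y, p)\<bar> \<le> \<epsilon> / 2"
        using \<delta>[of x y p] by simp
    qed
    then show "dist (Inf (g ` (Y \<times> P))) (Inf (g ` (X \<times> P))) < \<epsilon>"
      using \<open>\<epsilon> > 0\<close> by (simp add: dist_real_def)
  qed (rule \<open>\<delta> > 0\<close>)
qed

lemma traj_cong: "(\<And>i. i < k \<Longrightarrow> \<pi> i = \<pi>' i) \<Longrightarrow> traj f x \<pi> k = traj f x \<pi>' k"
  by (induction k) auto

lemma traj_append:
  "traj f x (\<lambda>i. if i < K then \<pi> i else \<pi>' (i - K)) (j + K) = traj f (traj f x \<pi> K) \<pi>' j"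
  by (induction j) (auto intro: traj_cong)

lemma continuous_on_traj:
  fixes f :: "'a::topological_space \<Rightarrow> 'b::topological_space \<Rightarrow> 'a"
  assumes "continuous_on UNIV (\<lambda>(x, u). f x u)"
  shows "continuous_on UNIV (\<lambda>(x, \<pi>). traj f x \<pi> k)"
proof (induction k)
  case 0
  then show ?case
    by (simp add: case_prod_beta continuous_on_fst)
next
  case (Suc k)
  have "continuous_on UNIV (\<lambda>z::'a \<times> (nat \<Rightarrow> 'b). snd z k)"
    by (intro continuous_on_compose2[OF continuous_on_product_coordinates continuous_on_snd]) auto
  then have "continuous_on UNIV (\<lambda>z::'a \<times> (nat \<Rightarrow> 'b). (traj f (fst z) (snd z) k, snd z k))"
    using Suc by (intro continuous_on_Pair) (simp_all add: case_prod_beta)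
  from continuous_on_compose2[OF assms this] show ?case
    by (simp add: case_prod_beta)
qed

lemma compact_controls:
  fixes U :: "'a::topological_space set"
  assumes "compact U"
  shows "compact {\<pi>::nat \<Rightarrow> 'a. \<forall>j. \<pi> j \<in> U}"
proof -
  have "{\<pi>::nat \<Rightarrow> 'a. \<forall>j. \<pi> j \<in> U} = PiE UNIV (\<lambda>_. U)"
    by (auto simp: PiE_def)
  moreover have "compactin (product_topology (\<lambda>_. euclidean) UNIV) (PiE UNIV (\<lambda>_. U))"
    using assms by (simp add: compactin_PiE)
  ultimately show ?thesis
    by (simp add: euclidean_product_topology)
qed

lemma reach_eq_image: "reach f U X k = (\<lambda>(x, \<pi>). traj f x \<pi> k) ` (X \<times> {\<pi>. \<forall>j. \<pi> j \<in> U})"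
  unfolding reach_def by auto

lemma Psi_reach_le:
  assumes "\<And>x. 0 \<le> \<alpha> x" "y \<in> Y" "\<forall>j. \<pi> j \<in> U"
  shows "Psi \<alpha> (reach f U Y k) \<le> \<alpha> (traj f y \<pi> k)"
proof -
  have "bdd_below (\<alpha> ` reach f U Y k)"
    by (rule bdd_belowI2[of _ 0]) (rule assms(1))
  moreover have "traj f y \<pi> k \<in> reach f U Y k"
    using assms(2,3) unfolding reach_def by blast
  ultimately show ?thesis
    unfolding Psi_def by (simp add: cInf_lower)
qed

lemma Psi_reach_nonneg:
  assumes "\<And>x. 0 \<le> \<alpha> x" "Y \<noteq> {}" "U \<noteq> {}"
  shows "0 \<le> Psi \<alpha> (reach f U Y k)"
proof -
  obtain y u where "y \<in> Y" "u \<in> U"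
    using assms(2,3) by blast
  then have "traj f y (\<lambda>_. u) k \<in> reach f U Y k"
    unfolding reach_def by blast
  then show ?thesis
    unfolding Psi_def using assms(1) by (intro cInf_greatest) auto
qed

lemma tendsto_Psi_reach_hausdorff_nhds:
  fixes f :: "'a::{real_normed_vector,heine_borel} \<Rightarrow> 'b::metric_space \<Rightarrow> 'a"
  assumes f: "continuous_on UNIV (\<lambda>(x, u). f x u)" and U: "compact U" "U \<noteq> {}"
    and \<alpha>: "continuous_on UNIV \<alpha>" "\<And>x. 0 \<le> \<alpha> x" and X: "compact X" "X \<noteq> {}"
  shows "((\<lambda>Y. Psi \<alpha> (reach f U Y k)) \<longlongrightarrow> Psi \<alpha> (reach f U X k)) (hausdorff_nhds X)"
proof -
  define g where "g = (\<lambda>(x, \<pi>). \<alpha> (traj f x \<pi> k))"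
  have Psi_eq: "Psi \<alpha> (reach f U Y k) = Inf (g ` (Y \<times> {\<pi>. \<forall>j. \<pi> j \<in> U}))" for Y
    unfolding Psi_def reach_eq_image g_def image_image by (simp add: case_prod_beta)
  have "continuous_on UNIV g"
    unfolding g_def using continuous_on_compose2[OF \<alpha>(1) continuous_on_traj[OF f, of k]]
    by (simp add: case_prod_beta)
  moreover have "{\<pi>. \<forall>j. \<pi> j \<in> U} \<noteq> {}"
    using U(2) by auto
  ultimately show ?thesis
    unfolding Psi_eq using X compact_controls[OF U(1)] \<alpha>(2)
    by (intro tendsto_Inf_image_Times_hausdorff_nhds) (auto simp: g_def)
qed

lemma traj_ndist_less_near:
  fixes nrm :: "real^'n \<Rightarrow> real" and f :: "real^'n \<Rightarrow> 'u::topological_space \<Rightarrow> real^'n"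
  assumes norm: "is_norm nrm" and "A \<noteq> {}" and f: "continuous_on UNIV (\<lambda>(x, u). f x u)"
    and "ndist nrm (traj f x0 \<pi> K) A < r"
  shows "\<exists>\<delta>>0. \<forall>y. dist y x0 < \<delta> \<longrightarrow> ndist nrm (traj f y \<pi> K) A < r"
proof -
  have "continuous_on UNIV (\<lambda>y. traj f y \<pi> K)"
    using continuous_on_compose2[OF continuous_on_traj[OF f, of K]
        continuous_on_Pair[OF continuous_on_id continuous_on_const, of UNIV \<pi>]] by simp
  then have "continuous_on UNIV (\<lambda>y. ndist nrm (traj f y \<pi> K) A)"
    by (rule continuous_on_compose2[OF continuous_on_ndist[OF norm \<open>A \<noteq> {}\<close>]]) simp
  then have "open {y. ndist nrm (traj f y \<pi> K) A < r}"
    by (rule open_Collect_less[OF _ continuous_on_const])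
  moreover have "x0 \<in> {y. ndist nrm (traj f y \<pi> K) A < r}"
    using assms(4) by simp
  ultimately obtain \<delta> where "\<delta> > 0" "ball x0 \<delta> \<subseteq> {y. ndist nrm (traj f y \<pi> K) A < r}"
    by (rule openE)
  then show ?thesis
    by (auto simp: dist_commute subset_iff)
qed

lemma domA_stabilizable_near:
  fixes nrm :: "real^'n \<Rightarrow> real" and f :: "real^'n \<Rightarrow> 'u::topological_space \<Rightarrow> real^'n"
  assumes norm: "is_norm nrm" and "A \<noteq> {}" and f: "continuous_on UNIV (\<lambda>(x, u). f x u)"
    and "r > 0" "M \<ge> 0" and lam_mono: "\<forall>k. mono_on {0..r} (\<lambda>s. lam s k)"
    and stab: "\<forall>x. ndist nrm x A \<le> r \<longrightarrow>
                 (\<exists>\<pi>. (\<forall>j. \<pi> j \<in> U) \<and>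
                    (\<forall>k. ndist nrm (traj f x \<pi> k) A \<le> M * lam (ndist nrm x A) k))"
    and "x0 \<in> domA nrm f U A"
  shows "\<exists>\<delta>>0. \<exists>K. \<forall>y. dist y x0 < \<delta> \<longrightarrow>
           (\<exists>\<pi>. (\<forall>j. \<pi> j \<in> U) \<and> (\<forall>j. ndist nrm (traj f y \<pi> (j + K)) A \<le> M * lam r j))"
proof -
  obtain \<pi>0 where \<pi>0: "\<forall>j. \<pi>0 j \<in> U" "(\<lambda>k. ndist nrm (traj f x0 \<pi>0 k) A) \<longlonglongrightarrow> 0"
    using assms(8) unfolding domA_def by blast
  have "eventually (\<lambda>k. ndist nrm (traj f x0 \<pi>0 k) A < r) sequentially"
    by (rule order_tendstoD(2)[OF \<pi>0(2) \<open>r > 0\<close>])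
  then obtain K where "ndist nrm (traj f x0 \<pi>0 K) A < r"
    using eventually_happens'[OF sequentially_bot] by blast
  then obtain \<delta> where "\<delta> > 0" and \<delta>: "\<And>y. dist y x0 < \<delta> \<Longrightarrow> ndist nrm (traj f y \<pi>0 K) A < r"
    using traj_ndist_less_near[OF norm \<open>A \<noteq> {}\<close> f] by blast
  have "\<exists>\<pi>. (\<forall>j. \<pi> j \<in> U) \<and> (\<forall>j. ndist nrm (traj f y \<pi> (j + K)) A \<le> M * lam r j)"
    if "dist y x0 < \<delta>" for y
  proof -
    define z where "z = traj f y \<pi>0 K"
    have z: "ndist nrm z A \<in> {0..r}"
      using \<delta>[OF that] ndist_nonneg[OF norm \<open>A \<noteq> {}\<close>] by (simp add: z_def less_imp_le)
    then obtain \<pi>1 where \<pi>1: "\<forall>j. \<pi>1 j \<in> U" "\<And>k. ndist nrm (traj f z \<pi>1 k) A \<le> M * lam (ndist nrm z A) k"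
      using stab by auto
    let ?\<pi> = "\<lambda>i. if i < K then \<pi>0 i else \<pi>1 (i - K)"
    show ?thesis
    proof (intro exI[of _ ?\<pi>] conjI allI)
      show "?\<pi> j \<in> U" for j
        using \<pi>0(1) \<pi>1(1) by simp
      fix j
      have "ndist nrm (traj f y ?\<pi> (j + K)) A = ndist nrm (traj f z \<pi>1 j) A"
        by (simp add: traj_append z_def)
      also have "\<dots> \<le> M * lam (ndist nrm z A) j"
        by (rule \<pi>1(2))
      also have "\<dots> \<le> M * lam r j"
        using lam_mono z \<open>r > 0\<close> \<open>M \<ge> 0\<close> by (intro mult_left_mono) (auto simp: mono_on_def)
      finally show "ndist nrm (traj f y ?\<pi> (j + K)) A \<le> M * lam r j" .
    qed
  qed
  with \<open>\<delta> > 0\<close> show ?thesis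
    by blast
qed

lemma eventually_Psi_reach_shift_le:
  fixes f :: "'a::metric_space \<Rightarrow> 'b \<Rightarrow> 'a"
  assumes "\<And>x. 0 \<le> \<alpha> x" "x0 \<in> X" "\<delta> > 0"
    and "\<And>y. dist y x0 < \<delta> \<Longrightarrow> \<exists>\<pi>. (\<forall>j. \<pi> j \<in> U) \<and> (\<forall>j. \<alpha> (traj f y \<pi> (j + K)) \<le> D j)"
  shows "eventually (\<lambda>Y. \<forall>j. Psi \<alpha> (reach f U Y (j + K)) \<le> D j) (hausdorff_nhds X)"
  unfolding eventually_hausdorff_nhds
proof (intro exI[of _ \<delta>] conjI allI impI)
  fix Y assume "\<forall>x\<in>X. \<exists>y\<in>Y. dist x y < \<delta>"
  then obtain y where "y \<in> Y" "dist y x0 < \<delta>"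
    using assms(2) by (metis dist_commute)
  then obtain \<pi> where \<pi>: "\<forall>j. \<pi> j \<in> U" "\<And>j. \<alpha> (traj f y \<pi> (j + K)) \<le> D j"
    using assms(4) by blast
  show "Psi \<alpha> (reach f U Y (j + K)) \<le> D j" for j
    using Psi_reach_le[OF assms(1) \<open>y \<in> Y\<close> \<pi>(1)] \<pi>(2)[of j] by (rule order_trans)
qed (rule assms(3))

lemma eventually_Psi_reach_tail_le:
  fixes nrm :: "real^'n \<Rightarrow> real" and f :: "real^'n \<Rightarrow> 'u::topological_space \<Rightarrow> real^'n"
  assumes norm: "is_norm nrm" and A: "A \<noteq> {}" and f: "continuous_on UNIV (\<lambda>(x, u). f x u)"
    and "r > 0" "M \<ge> 0" and lam_mono: "\<forall>k. mono_on {0..r} (\<lambda>s. lam s k)"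
    and stab: "\<forall>x. ndist nrm x A \<le> r \<longrightarrow>
                 (\<exists>\<pi>. (\<forall>j. \<pi> j \<in> U) \<and>
                    (\<forall>k. ndist nrm (traj f x \<pi> k) A \<le> M * lam (ndist nrm x A) k))"
    and \<alpha>: "\<And>x. 0 \<le> \<alpha> x" "\<And>x. \<alpha> x \<le> c * ndist nrm x A powr q" and "c \<ge> 0" "q \<ge> 0"
    and "x0 \<in> X" "x0 \<in> domA nrm f U A"
  shows "\<exists>K. eventually (\<lambda>Y. \<forall>j. Psi \<alpha> (reach f U Y (j + K)) \<le> c * (M * lam r j) powr q)
               (hausdorff_nhds X)"
proof -
  obtain \<delta> K where "\<delta> > 0" and steer: "\<And>y. dist y x0 < \<delta> \<Longrightarrow>
      \<exists>\<pi>. (\<forall>j. \<pi> j \<in> U) \<and> (\<forall>j. ndist nrm (traj f y \<pi> (j + K)) A \<le> M * lam r j)"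
    using domA_stabilizable_near[OF norm A f assms(4,5) lam_mono stab assms(13)] by blast
  have steer_\<alpha>: "\<exists>\<pi>. (\<forall>j. \<pi> j \<in> U) \<and> (\<forall>j. \<alpha> (traj f y \<pi> (j + K)) \<le> c * (M * lam r j) powr q)"
    if y: "dist y x0 < \<delta>" for y
  proof -
    obtain \<pi> where "\<forall>j. \<pi> j \<in> U" and \<pi>: "\<And>j. ndist nrm (traj f y \<pi> (j + K)) A \<le> M * lam r j"
      using steer[OF y] by blast
    moreover have "\<alpha> (traj f y \<pi> (j + K)) \<le> c * (M * lam r j) powr q" for j
      using \<alpha>(2) order_trans mult_left_mono[OF powr_mono2[OF \<open>q \<ge> 0\<close> ndist_nonneg[OF norm A] \<pi>] \<open>c \<ge> 0\<close>]
      by blast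
    ultimately show ?thesis
      by blast
  qed
  show ?thesis
    using eventually_Psi_reach_shift_le[OF \<alpha>(1) \<open>x0 \<in> X\<close> \<open>\<delta> > 0\<close> steer_\<alpha>] by blast
qed

lemma tendsto_Vfun_hausdorff_nhds:
  fixes f :: "'a::{real_normed_vector,heine_borel} \<Rightarrow> 'b::metric_space \<Rightarrow> 'a"
  assumes f: "continuous_on UNIV (\<lambda>(x, u). f x u)" and U: "compact U" "U \<noteq> {}"
    and \<alpha>: "continuous_on UNIV \<alpha>" "\<And>x. 0 \<le> \<alpha> x" and X: "compact X" "X \<noteq> {}"
    and "summable D"
    and tail: "eventually (\<lambda>Y. \<forall>j. Psi \<alpha> (reach f U Y (j + K)) \<le> D j) (hausdorff_nhds X)"
  shows "(Vfun \<alpha> f U \<longlongrightarrow> Vfun \<alpha> f U X) (hausdorff_nhds X)"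
proof -
  define a where "a k Y = Psi \<alpha> (reach f U Y k)" for k Y
  have a_nonneg: "0 \<le> a k Y" if "Y \<noteq> {}" for k Y
    unfolding a_def using \<alpha>(2) that U(2) by (rule Psi_reach_nonneg)
  have nonempty: "eventually (\<lambda>Y. Y \<noteq> {}) (hausdorff_nhds X)"
    using X(2) by (rule eventually_hausdorff_nhds_nonempty)
  have bound: "eventually (\<lambda>(k, Y). norm (a k Y) \<le> D (k - K)) (at_top \<times>\<^sub>F hausdorff_nhds X)"
    unfolding eventually_prod_filter prod.case
  proof (intro exI conjI allI impI)
    show "eventually (\<lambda>k. K \<le> k) at_top"
      by (rule eventually_ge_at_top)
    show "eventually (\<lambda>Y. Y \<noteq> {} \<and> (\<forall>j. a (j + K) Y \<le> D j)) (hausdorff_nhds X)"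
      using nonempty tail unfolding a_def by (rule eventually_conj)
    fix k Y assume "K \<le> k" "Y \<noteq> {} \<and> (\<forall>j. a (j + K) Y \<le> D j)"
    then show "norm (a k Y) \<le> D (k - K)"
      using a_nonneg[of Y k] by (metis le_add_diff_inverse2 real_norm_def abs_of_nonneg)
  qed
  have "summable (\<lambda>k. D (k - K))"
    using \<open>summable D\<close> summable_iff_shift[of "\<lambda>k. D (k - K)" K] by simp
  have lim_a: "((\<lambda>Y. a k Y) \<longlongrightarrow> a k X) (hausdorff_nhds X)" for k
    unfolding a_def by (rule tendsto_Psi_reach_hausdorff_nhds[OF f U \<alpha> X])
  note tannery = tannerys_theorem[OF lim_a bound \<open>summable (\<lambda>k. D (k - K))\<close> hausdorff_nhds_neq_bot]
  have summable: "eventually (\<lambda>Y. summable (\<lambda>k. norm (a k Y))) (hausdorff_nhds X)"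
      "summable (\<lambda>k. norm (a k X))"
    and lim: "((\<lambda>Y. \<Sum>k. a k Y) \<longlongrightarrow> (\<Sum>k. a k X)) (hausdorff_nhds X)"
    using tannery by blast+
  have Vfun_eq: "Vfun \<alpha> f U Y = ennreal (\<Sum>k. a k Y)" if "Y \<noteq> {}" "summable (\<lambda>k. norm (a k Y))" for Y
    unfolding Vfun_def a_def[symmetric] using that a_nonneg
    by (intro suminf_ennreal2) (auto intro: summable_norm_cancel)
  have "eventually (\<lambda>Y. ennreal (\<Sum>k. a k Y) = Vfun \<alpha> f U Y) (hausdorff_nhds X)"
    using nonempty summable(1) by eventually_elim (simp add: Vfun_eq)
  with tendsto_ennrealI[OF lim] show ?thesis
    using Vfun_eq[OF X(2) summable(2)] by (simp add: Lim_transform_eventually)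
qed

lemma summable_scaled_powr_larger_exponent:
  fixes a :: "nat \<Rightarrow> real"
  assumes "summable (\<lambda>j. a j powr p)" "\<And>j. 0 \<le> a j" "\<And>j. a j \<le> B" "p \<le> q" "M \<ge> 0"
  shows "summable (\<lambda>j. c * (M * a j) powr q)"
proof -
  have "summable (\<lambda>j. a j powr q)"
  proof (rule summable_comparison_test'[where N = 0])
    show "summable (\<lambda>j. B powr (q - p) * a j powr p)"
      using assms(1) by (rule summable_mult)
    fix j
    have "a j powr q = a j powr (q - p) * a j powr p"
      by (simp add: powr_add[symmetric])
    also have "\<dots> \<le> B powr (q - p) * a j powr p"
      using assms(2-4) by (intro mult_right_mono powr_mono2) auto
    finally show "norm (a j powr q) \<le> B powr (q - p) * a j powr p"
      by simp
  qed
  then have "summable (\<lambda>j. c * M powr q * a j powr q)"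
    by (rule summable_mult)
  then show ?thesis
    using assms(2,5) by (simp add: powr_mult mult.assoc)
qed

theorem theorem7:
  fixes nrm :: "real^'n \<Rightarrow> real"
    and f :: "real^'n \<Rightarrow> real^'m \<Rightarrow> real^'n"
    and U :: "(real^'m) set"
    and A :: "(real^'n) set"
    and r M p :: real
    and lam :: "real \<Rightarrow> nat \<Rightarrow> real"
    and \<alpha> :: "real^'n \<Rightarrow> real"
    and \<alpha>lo \<alpha>hi pbar :: real
  assumes norm: "is_norm nrm"
    and f_cont: "continuous_on UNIV (\<lambda>(x, u). f x u)"
    and U_compact: "compact U" and U_ne: "U \<noteq> {}"
    and A_compact: "compact A" and A_ne: "A \<noteq> {}"
    and A_inv: "\<forall>x\<in>A. \<exists>u\<in>U. f x u \<in> A"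
    and r_pos: "r > 0" and M_ge: "M \<ge> 1" and p_pos: "p > 0"
    and lam_nonneg: "\<forall>s\<in>{0..r}. \<forall>k. lam s k \<ge> 0"
    and lam_cont: "\<forall>k. continuous_on {0..r} (\<lambda>s. lam s k)"
    and lam_mono: "\<forall>k. mono_on {0..r} (\<lambda>s. lam s k)"
    and lam_zero: "\<forall>k. lam 0 k = 0"
    and lam_antimono: "\<forall>s\<in>{0..r}. \<forall>k l. k \<le> l \<longrightarrow> lam s l \<le> lam s k"
    and lam_init: "\<forall>s\<in>{0..r}. lam s 0 \<le> s"
    and lam_summable: "summable (\<lambda>k. lam r k powr p)"
    and stab: "\<forall>x. ndist nrm x A \<le> r \<longrightarrow>
                 (\<exists>\<pi>. (\<forall>j. \<pi> j \<in> U) \<and>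
                    (\<forall>k. ndist nrm (traj f x \<pi> k) A \<le> M * lam (ndist nrm x A) k))"
    and \<alpha>_cont: "continuous_on UNIV \<alpha>"
    and \<alpha>_nonneg: "\<forall>x. \<alpha> x \<ge> 0"
    and \<alpha>lo_pos: "\<alpha>lo > 0" and \<alpha>hi_pos: "\<alpha>hi > 0" and pbar_ge: "pbar \<ge> p"
    and \<alpha>_bounds: "\<forall>x. \<alpha>lo * ndist nrm x A powr pbar \<le> \<alpha> x
                      \<and> \<alpha> x \<le> \<alpha>hi * ndist nrm x A powr pbar"
  shows "\<forall>X \<in> {X. compact X \<and> X \<noteq> {} \<and> X \<inter> domA nrm f U A \<noteq> {}}.
           \<forall>S. open S \<and> Vfun \<alpha> f U X \<in> S \<longrightarrow>
             (\<exists>\<delta>>0. \<forall>Y \<in> {X. compact X \<and> X \<noteq> {} \<and> X \<inter> domA nrm f U A \<noteq> {}}.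
                 nhausdist nrm Y X < \<delta> \<longrightarrow> Vfun \<alpha> f U Y \<in> S)"
proof (intro ballI allI impI)
  fix X S
  assume "X \<in> {X. compact X \<and> X \<noteq> {} \<and> X \<inter> domA nrm f U A \<noteq> {}}"
    and S: "open S \<and> Vfun \<alpha> f U X \<in> S"
  then obtain x0 where X: "compact X" "X \<noteq> {}" and x0: "x0 \<in> X" "x0 \<in> domA nrm f U A"
    by blast
  obtain K where tail: "eventually (\<lambda>Y. \<forall>j. Psi \<alpha> (reach f U Y (j + K)) \<le> \<alpha>hi * (M * lam r j) powr pbar)
      (hausdorff_nhds X)"
    using eventually_Psi_reach_tail_le[OF norm A_ne f_cont r_pos _ lam_mono stab _ _ _ _ x0]
      M_ge \<alpha>_nonneg \<alpha>_bounds \<alpha>hi_pos p_pos pbar_ge by force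
  have r: "r \<in> {0..r}"
    using r_pos by simp
  have lam_r: "0 \<le> lam r j \<and> lam r j \<le> r" for j
    using lam_nonneg[rule_format, OF r, of j]
      order_trans[OF lam_antimono[rule_format, OF r, of 0 j] lam_init[rule_format, OF r]] by simp
  have "summable (\<lambda>j. \<alpha>hi * (M * lam r j) powr pbar)"
    using lam_summable lam_r pbar_ge M_ge by (intro summable_scaled_powr_larger_exponent[where B = r]) auto
  with tail have "(Vfun \<alpha> f U \<longlongrightarrow> Vfun \<alpha> f U X) (hausdorff_nhds X)"
    using f_cont U_compact U_ne \<alpha>_cont \<alpha>_nonneg X by (intro tendsto_Vfun_hausdorff_nhds) auto
  then have "eventually (\<lambda>Y. Vfun \<alpha> f U Y \<in> S) (hausdorff_nhds X)"
    using S by (auto intro: topological_tendstoD)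
  then show "\<exists>\<delta>>0. \<forall>Y\<in>{X. compact X \<and> X \<noteq> {} \<and> X \<inter> domA nrm f U A \<noteq> {}}.
      nhausdist nrm Y X < \<delta> \<longrightarrow> Vfun \<alpha> f U Y \<in> S"
    using eventually_hausdorff_nhds_nhausdist[OF norm X] by blast
qed

end
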